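(* Let $\mathcal{X}$ be a finite set and $\underline{Q}$ a lower transition rate operator on $\mathcal{L}(\mathcal{X})$. Then for all $A\subseteq\mathcal{X}$, all $x\in\mathcal{X}$ and all $t,s>0$: (1) if $x\in A$ then $\underline{T}_t\mathbb{I}_A(x)>0$; and $\underline{T}_t\mathbb{I}_A(x)>0\iff\underline{T}_s\mathbb{I}_A(x)>0$; (2) if $x\notin A$ then $\underline{T}_t\mathbb{I}_A(x)<1$; and $\underline{T}_t\mathbb{I}_A(x)<1\iff\underline{T}_s\mathbb{I}_A(x)<1$; (3) if $x\in A$ then $\overline{T}_t\mathbb{I}_A(x)>0$; and $\overline{T}_t\mathbb{I}_A(x)>0\iff\overline{T}_s\mathbb{I}_A(x)>0$; (4) if $x\notin A$ then $\overline{T}_t\mathbb{I}_A(x)<1$; and $\overline{T}_t\mathbb{I}_A(x)<1\iff\overline{T}_s\mathbb{I}_A(x)<1$.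
   Context: $\mathcal{L}(\mathcal{X})$ is the set of real-valued functions on $\mathcal{X}$ with pointwise operations and order, real constants identified with constant functions, $\mathbb{I}_A$ the indicator of $A$, $\mathbb{I}_y\coloneqq\mathbb{I}_{\{y\}}$. A lower transition rate operator is a map $\underline{Q}\colon\mathcal{L}(\mathcal{X})\to\mathcal{L}(\mathcal{X})$ such that for all $f,g$, $\lambda\ge0$, $\mu\in\mathbb{R}$, $x,y\in\mathcal{X}$: $\underline{Q}(\mu)=0$; $\underline{Q}(f+g)\ge\underline{Q}f+\underline{Q}g$; $\underline{Q}(\lambda f)=\lambda\underline{Q}f$; $x\ne y\Rightarrow\underline{Q}(\mathbb{I}_y)(x)\ge0$. For each $f$, $t\mapsto\underline{T}_tf$ is the unique solution on $[0,\infty)$ of $\frac{d}{dt}\underline{T}_tf=\underline{Q}\,\underline{T}_tf$ with $\underline{T}_0f=f$ (existence and uniqueness are known), and $\overline{T}_tf\coloneqq-\underline{T}_t(-f)$. *)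

theory Defs
  imports "HOL-Analysis.Analysis"
begin

definition lower_rate_op :: "(('x \<Rightarrow> real) \<Rightarrow> ('x \<Rightarrow> real)) \<Rightarrow> bool" where
  "lower_rate_op Q \<longleftrightarrow>
     (\<forall>\<mu>::real. Q (\<lambda>_. \<mu>) = (\<lambda>_. 0)) \<and>
     (\<forall>f g. \<forall>x. Q (\<lambda>y. f y + g y) x \<ge> Q f x + Q g x) \<and>
     (\<forall>f. \<forall>l::real. l \<ge> 0 \<longrightarrow> Q (\<lambda>y. l * f y) = (\<lambda>y. l * Q f y)) \<and>
     (\<forall>x y. x \<noteq> y \<longrightarrow> Q (indicator {y}) x \<ge> 0)"

text \<open>T is the family of solutions of d/dt T_t f = Q (T_t f), T_0 f = f, on [0,\<infinity>)
  (componentwise derivative; X finite so this is the derivative in L(X)).\<close>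
definition lower_semigroup_of ::
  "(('x \<Rightarrow> real) \<Rightarrow> ('x \<Rightarrow> real)) \<Rightarrow> (real \<Rightarrow> ('x \<Rightarrow> real) \<Rightarrow> ('x \<Rightarrow> real)) \<Rightarrow> bool" where
  "lower_semigroup_of Q T \<longleftrightarrow>
     (\<forall>f. T 0 f = f \<and>
        (\<forall>t\<ge>0. \<forall>x. ((\<lambda>s. T s f x) has_real_derivative Q (T t f) x) (at t within {0..})))"

definition upper_of :: "(real \<Rightarrow> ('x \<Rightarrow> real) \<Rightarrow> ('x \<Rightarrow> real)) \<Rightarrow> real \<Rightarrow> ('x \<Rightarrow> real) \<Rightarrow> ('x \<Rightarrow> real)" where
  "upper_of T t f = (\<lambda>x. - T t (\<lambda>y. - f y) x)"

end

theory Submission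
  imports Defs
begin

text \<open>Everything rests on a comparison principle for \<open>u' = Q u\<close>: a subsolution that starts
  below a supersolution stays below it, since \<open>Q f x \<le> Q g x\<close> whenever \<open>f \<le> g\<close> and \<open>f x = g x\<close>.
  If \<open>\<mu> \<le> f\<close> and \<open>T\<^sub>a f x > \<mu>\<close>, then \<open>\<mu> + c exp (q (r - a)) indicator {x}\<close> with
  \<open>q = Q (indicator {x}) x\<close> is a subsolution below \<open>T\<^sub>r f\<close>, so \<open>T\<^sub>r f x > \<mu>\<close> for all
  \<open>r \<ge> a\<close>; with \<open>a = 0\<close> this gives strict positivity on \<open>A\<close>. Conversely, if \<open>T\<^sub>t f x = \<mu>\<close> for
  some \<open>t > 0\<close>, let \<open>P = {y. T\<^sub>t f y > \<mu>}\<close>. Off \<open>P\<close> the solution has an interior minimum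
  in time, so its derivative \<open>Q (T\<^sub>t f)\<close> vanishes there, and comparing \<open>T\<^sub>t f\<close> with
  \<open>\<mu> + c indicator P\<close> gives \<open>Q (indicator P) \<le> 0\<close> everywhere. Hence \<open>\<mu> + K indicator P\<close> is a
  stationary supersolution and \<open>T\<^sub>s f x = \<mu>\<close> for all \<open>s \<ge> t\<close>. Upper bounds are dual, and the
  statements about the upper operator are those about \<open>T\<close> applied to \<open>- indicator A\<close>.\<close>

lemma first_nonpositive_time:
  fixes \<phi> :: "'i::finite \<Rightarrow> real \<Rightarrow> real"
  assumes cont: "\<And>i. continuous_on {a..b} (\<phi> i)"
    and start: "\<And>i. 0 < \<phi> i a"
    and nonpos: "s \<in> {a..b}" "\<phi> j s \<le> 0"
  obtains s0 i where "a < s0" "s0 \<le> b" "\<phi> i s0 = 0"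
    "\<And>k. 0 \<le> \<phi> k s0" "\<And>k r. a \<le> r \<Longrightarrow> r < s0 \<Longrightarrow> 0 < \<phi> k r"
proof -
  define S where "S = (\<Union>i. {r \<in> {a..b}. \<phi> i r \<le> 0})"
  have "closed {r \<in> {a..b}. \<phi> i r \<le> 0}" for i
    by (intro continuous_on_closed_Collect_le cont continuous_on_const closed_atLeastAtMost)
  then have "closed S"
    unfolding S_def by (intro closed_UN) auto
  moreover have "S \<noteq> {}" "bdd_below S"
    using nonpos by (auto simp: S_def intro: bdd_belowI[of _ a])
  ultimately have "Inf S \<in> S" and Inf_le: "\<And>r. r \<in> S \<Longrightarrow> Inf S \<le> r"
    by (auto intro: closed_contains_Inf cInf_lower)
  then obtain i where i: "a \<le> Inf S" "Inf S \<le> b" "\<phi> i (Inf S) \<le> 0"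
    unfolding S_def by auto
  have "Inf S \<noteq> a" using start[of i] i by auto
  with i have a_less: "a < Inf S" by simp
  have before: "0 < \<phi> k r" if "a \<le> r" "r < Inf S" for k r
  proof (rule ccontr)
    assume "\<not> 0 < \<phi> k r"
    then have "r \<in> S" using that i unfolding S_def by (auto simp: not_less)
    with Inf_le[of r] that show False by simp
  qed
  have at: "0 \<le> \<phi> k (Inf S)" for k
  proof -
    have "closed {r \<in> {a..b}. 0 \<le> \<phi> k r}"
      by (intro continuous_on_closed_Collect_le cont continuous_on_const closed_atLeastAtMost)
    moreover have "{a..<Inf S} \<subseteq> {r \<in> {a..b}. 0 \<le> \<phi> k r}"
      using before i by (auto intro: less_imp_le)
    ultimately have "closure {a..<Inf S} \<subseteq> {r \<in> {a..b}. 0 \<le> \<phi> k r}"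
      by (rule closure_minimal[rotated])
    then show ?thesis using a_less by (auto simp: subset_eq)
  qed
  show ?thesis
    by (rule that[OF a_less i(2), of i]) (use i at before in \<open>auto intro: order.antisym\<close>)
qed

locale lower_rate_operator =
  fixes Q :: "('x::finite \<Rightarrow> real) \<Rightarrow> ('x \<Rightarrow> real)"
  assumes lower_rate_op: "lower_rate_op Q"
begin

lemma Q_const: "Q (\<lambda>_. \<mu>) = (\<lambda>_. 0)"
  using lower_rate_op unfolding lower_rate_op_def by blast

lemma Q_superadditive: "Q f x + Q g x \<le> Q (\<lambda>y. f y + g y) x"
  using lower_rate_op unfolding lower_rate_op_def by blast

lemma Q_pos_homogeneous: "0 \<le> l \<Longrightarrow> Q (\<lambda>y. l * f y) = (\<lambda>y. l * Q f y)"
  using lower_rate_op unfolding lower_rate_op_def by blast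

lemma Q_indicator_nonneg: "x \<noteq> y \<Longrightarrow> 0 \<le> Q (indicator {y}) x"
  using lower_rate_op unfolding lower_rate_op_def by blast

lemma Q_add_const: "Q (\<lambda>y. f y + c) = Q f"
proof
  fix x
  have "Q f x \<le> Q (\<lambda>y. f y + c) x"
    using Q_superadditive[of f x "\<lambda>_. c"] by (simp add: Q_const)
  moreover have "Q (\<lambda>y. f y + c) x \<le> Q f x"
    using Q_superadditive[of "\<lambda>y. f y + c" x "\<lambda>_. - c"] by (simp add: Q_const)
  ultimately show "Q (\<lambda>y. f y + c) x = Q f x" by simp
qed

lemma Q_affine: "0 \<le> c \<Longrightarrow> Q (\<lambda>y. \<mu> + c * g y) = (\<lambda>y. c * Q g y)"
  using Q_add_const[of "\<lambda>y. c * g y" \<mu>] Q_pos_homogeneous[of c g] by (simp add: add.commute)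

lemma Q_sum_ge: "finite S \<Longrightarrow> (\<Sum>i\<in>S. Q (F i) x) \<le> Q (\<lambda>y. \<Sum>i\<in>S. F i y) x"
proof (induction S rule: finite_induct)
  case empty
  then show ?case by (simp add: Q_const)
next
  case (insert i S)
  then show ?case
    using Q_superadditive[of "F i" x "\<lambda>y. \<Sum>i\<in>S. F i y"] by simp
qed

text \<open>At a minimum of \<open>h\<close>, the function \<open>h - h x\<close> is a nonnegative combination of
  indicators of points other than \<open>x\<close>, on each of which \<open>Q\<close> is nonnegative at \<open>x\<close>.\<close>
lemma Q_nonneg_at_min:
  assumes min: "\<And>y. h x \<le> h y"
  shows "0 \<le> Q h x"
proof -
  define g where "g = (\<lambda>y. h y - h x)"
  have g_sum: "g = (\<lambda>z. \<Sum>y\<in>UNIV. g y * indicator {y} z)"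
  proof
    fix z
    have "(\<Sum>y\<in>UNIV. g y * indicator {y} z) = (\<Sum>y\<in>{z}. g y * indicator {y} z)"
      by (rule sum.mono_neutral_right) auto
    then show "g z = (\<Sum>y\<in>UNIV. g y * indicator {y} z)" by simp
  qed
  have "0 \<le> Q (\<lambda>z. g y * indicator {y} z) x" for y
    using Q_pos_homogeneous[of "g y" "indicator {y}"] Q_indicator_nonneg[of x y] min
    by (cases "x = y") (auto simp: g_def)
  then have "0 \<le> (\<Sum>y\<in>UNIV. Q (\<lambda>z. g y * indicator {y} z) x)"
    by (rule sum_nonneg)
  also have "\<dots> \<le> Q g x"
    by (subst g_sum) (rule Q_sum_ge, simp)
  also have "Q g x = Q h x"
    using Q_add_const[of h "- h x"] by (simp add: g_def)
  finally show ?thesis .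
qed

lemma Q_nonpos_at_max:
  assumes max: "\<And>y. h y \<le> h x"
  shows "Q h x \<le> 0"
proof -
  have "0 \<le> Q (\<lambda>y. - h y) x"
    by (rule Q_nonneg_at_min) (simp add: max)
  moreover have "Q h x + Q (\<lambda>y. - h y) x \<le> 0"
    using Q_superadditive[of h x "\<lambda>y. - h y"] by (simp add: Q_const)
  ultimately show ?thesis by simp
qed

lemma Q_mono_at:
  assumes "\<And>y. f y \<le> g y" and "f x = g x"
  shows "Q f x \<le> Q g x"
proof -
  have "0 \<le> Q (\<lambda>y. g y - f y) x"
    by (rule Q_nonneg_at_min) (use assms in auto)
  then show ?thesis
    using Q_superadditive[of f x "\<lambda>y. g y - f y"] by simp
qed

text \<open>The margin \<open>\<epsilon> (1 + s - a)\<close> turns the non-strict inequalities between the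
  derivatives and \<open>Q\<close> into a strict one at the first time of contact.\<close>
lemma comparison_with_margin:
  fixes u w du dw :: "real \<Rightarrow> 'x \<Rightarrow> real"
  assumes du: "\<And>t y. a \<le> t \<Longrightarrow> ((\<lambda>s. u s y) has_real_derivative du t y) (at t within {a..})"
    and dw: "\<And>t y. a \<le> t \<Longrightarrow> ((\<lambda>s. w s y) has_real_derivative dw t y) (at t within {a..})"
    and sub: "\<And>t y. a \<le> t \<Longrightarrow> du t y \<le> Q (u t) y"
    and super: "\<And>t y. a \<le> t \<Longrightarrow> Q (w t) y \<le> dw t y"
    and init: "\<And>y. u a y \<le> w a y"
    and "0 < \<epsilon>" "s \<in> {a..b}"
  shows "u s x < w s x + \<epsilon> * (1 + s - a)"
proof (rule ccontr)
  define \<phi> where "\<phi> y r = w r y + \<epsilon> * (1 + r - a) - u r y" for y r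
  have d\<phi>: "(\<phi> y has_real_derivative dw r y + \<epsilon> - du r y) (at r within {a..})"
    if "a \<le> r" for r y
    unfolding \<phi>_def by (rule derivative_eq_intros dw du that refl | simp)+
  have "continuous_on {a..b} (\<phi> y)" for y
    by (rule DERIV_continuous_on, rule DERIV_subset[OF d\<phi>]) auto
  moreover have "0 < \<phi> y a" for y
    using init[of y] \<open>0 < \<epsilon>\<close> by (simp add: \<phi>_def)
  moreover assume "\<not> u s x < w s x + \<epsilon> * (1 + s - a)"
  then have "\<phi> x s \<le> 0" by (simp add: \<phi>_def)
  ultimately obtain s0 y where s0: "a < s0" "\<phi> y s0 = 0" "\<And>z. 0 \<le> \<phi> z s0"
    and before: "\<And>r. a \<le> r \<Longrightarrow> r < s0 \<Longrightarrow> 0 < \<phi> y r"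
    using first_nonpositive_time[of a b \<phi>] \<open>s \<in> {a..b}\<close> by metis
  define c where "c = \<epsilon> * (1 + s0 - a)"
  have "Q (u s0) y \<le> Q (\<lambda>z. w s0 z + c) y"
    by (rule Q_mono_at) (use s0 in \<open>auto simp: \<phi>_def c_def\<close>)
  then have "0 < dw s0 y + \<epsilon> - du s0 y"
    using sub[of s0 y] super[of s0 y] s0(1) \<open>0 < \<epsilon>\<close> by (simp add: Q_add_const)
  moreover have "(\<phi> y has_real_derivative dw s0 y + \<epsilon> - du s0 y) (at s0)"
    using d\<phi>[of s0 y] s0(1) at_within_interior[of s0 "{a..}"] by simp
  ultimately obtain d where "0 < d" and dec: "\<And>h. 0 < h \<Longrightarrow> h < d \<Longrightarrow> \<phi> y (s0 - h) < \<phi> y s0"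
    using DERIV_pos_inc_left by blast
  define h where "h = min (d / 2) (s0 - a)"
  have "0 < h" "h < d" "a \<le> s0 - h"
    using \<open>0 < d\<close> s0(1) by (auto simp: h_def)
  then show False
    using dec[of h] before[of "s0 - h"] s0(2) by simp
qed

lemma comparison:
  fixes u w du dw :: "real \<Rightarrow> 'x \<Rightarrow> real"
  assumes du: "\<And>t y. a \<le> t \<Longrightarrow> ((\<lambda>s. u s y) has_real_derivative du t y) (at t within {a..})"
    and dw: "\<And>t y. a \<le> t \<Longrightarrow> ((\<lambda>s. w s y) has_real_derivative dw t y) (at t within {a..})"
    and sub: "\<And>t y. a \<le> t \<Longrightarrow> du t y \<le> Q (u t) y"
    and super: "\<And>t y. a \<le> t \<Longrightarrow> Q (w t) y \<le> dw t y"
    and init: "\<And>y. u a y \<le> w a y"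
    and "a \<le> t"
  shows "u t x \<le> w t x"
proof (rule field_le_epsilon)
  fix e :: real
  assume "0 < e"
  with \<open>a \<le> t\<close> have "0 < e / (1 + t - a)" by simp
  from comparison_with_margin[OF du dw sub super init this, of t t x] \<open>a \<le> t\<close>
  show "u t x \<le> w t x + e" by simp
qed

end

locale lower_semigroup = lower_rate_operator Q for Q :: "('x::finite \<Rightarrow> real) \<Rightarrow> ('x \<Rightarrow> real)" +
  fixes T :: "real \<Rightarrow> ('x \<Rightarrow> real) \<Rightarrow> ('x \<Rightarrow> real)"
  assumes lower_semigroup_of: "lower_semigroup_of Q T"
begin

lemma T_zero: "T 0 f = f"
  using lower_semigroup_of unfolding lower_semigroup_of_def by blast

lemma T_has_derivative:
  assumes "0 \<le> a" "a \<le> t"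
  shows "((\<lambda>s. T s f y) has_real_derivative Q (T t f) y) (at t within {a..})"
proof -
  have "((\<lambda>s. T s f y) has_real_derivative Q (T t f) y) (at t within {0..})"
    using lower_semigroup_of assms unfolding lower_semigroup_of_def by auto
  then show ?thesis by (rule DERIV_subset) (use assms in auto)
qed

lemma T_has_derivative_at: "0 < t \<Longrightarrow> ((\<lambda>s. T s f y) has_real_derivative Q (T t f) y) (at t)"
  using T_has_derivative[of 0 t f y] at_within_interior[of t "{0..}"] by simp

lemma T_ge_subsolution:
  assumes du: "\<And>t y. a \<le> t \<Longrightarrow> ((\<lambda>s. u s y) has_real_derivative du t y) (at t within {a..})"
    and sub: "\<And>t y. a \<le> t \<Longrightarrow> du t y \<le> Q (u t) y"
    and init: "\<And>y. u a y \<le> T a f y"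
    and "0 \<le> a" "a \<le> t"
  shows "u t x \<le> T t f x"
  using comparison[where w="\<lambda>s. T s f" and dw="\<lambda>s. Q (T s f)", OF du T_has_derivative sub _ init]
    assms by auto

lemma T_le_supersolution:
  assumes dw: "\<And>t y. a \<le> t \<Longrightarrow> ((\<lambda>s. w s y) has_real_derivative dw t y) (at t within {a..})"
    and super: "\<And>t y. a \<le> t \<Longrightarrow> Q (w t) y \<le> dw t y"
    and init: "\<And>y. T a f y \<le> w a y"
    and "0 \<le> a" "a \<le> t"
  shows "T t f x \<le> w t x"
  using comparison[where u="\<lambda>s. T s f" and du="\<lambda>s. Q (T s f)", OF T_has_derivative dw _ super init]
    assms by auto

lemma T_ge_const: "(\<And>y. \<mu> \<le> f y) \<Longrightarrow> 0 \<le> t \<Longrightarrow> \<mu> \<le> T t f x"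
  using T_ge_subsolution[where u="\<lambda>_ _. \<mu>" and du="\<lambda>_ _. 0" and a=0]
  by (simp add: T_zero Q_const)

lemma T_le_const: "(\<And>y. f y \<le> M) \<Longrightarrow> 0 \<le> t \<Longrightarrow> T t f x \<le> M"
  using T_le_supersolution[where w="\<lambda>_ _. M" and dw="\<lambda>_ _. 0" and a=0]
  by (simp add: T_zero Q_const)

lemma T_gt_lower_bound_forward:
  assumes lower: "\<And>y. \<mu> \<le> f y" and "0 \<le> a" "a \<le> s" and "\<mu> < T a f x"
  shows "\<mu> < T s f x"
proof -
  define c where "c = T a f x - \<mu>"
  define q where "q = Q (indicator {x}) x"
  define u where "u r y = \<mu> + (c * exp (q * (r - a))) * indicator {x} y" for r y
  have "0 < c" using \<open>\<mu> < T a f x\<close> by (simp add: c_def)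
  have Q_u: "Q (u r) = (\<lambda>y. (c * exp (q * (r - a))) * Q (indicator {x}) y)" for r
    unfolding u_def using \<open>0 < c\<close> by (intro Q_affine) simp
  have "Q (indicator {x}) y \<ge> 0" if "y \<noteq> x" for y
    by (rule Q_nonneg_at_min) (use that in auto)
  then have sub: "c * (q * exp (q * (r - a))) * indicator {x} y \<le> Q (u r) y" for r y
    using \<open>0 < c\<close> by (cases "y = x") (auto simp: Q_u q_def)
  have "u s x \<le> T s f x"
  proof (rule T_ge_subsolution[OF _ sub])
    show "((\<lambda>r. u r y) has_real_derivative c * (q * exp (q * (r - a))) * indicator {x} y)
        (at r within {a..})" for r y
      unfolding u_def by (rule derivative_eq_intros refl | simp)+
    show "u a y \<le> T a f y" for y
      using T_ge_const[where f=f and x=y, OF lower \<open>0 \<le> a\<close>] by (cases "y = x") (auto simp: u_def c_def)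
  qed (use assms in auto)
  moreover have "\<mu> < u s x" using \<open>0 < c\<close> by (simp add: u_def)
  ultimately show ?thesis by simp
qed

lemma T_lt_upper_bound_forward:
  assumes upper: "\<And>y. f y \<le> \<mu>" and "0 \<le> a" "a \<le> s" and "T a f x < \<mu>"
  shows "T s f x < \<mu>"
proof -
  define c where "c = \<mu> - T a f x"
  define q where "q = Q (\<lambda>y. - indicator {x} y) x"
  define w where "w r y = \<mu> + (c * exp (- q * (r - a))) * - indicator {x} y" for r y
  have "0 < c" using \<open>T a f x < \<mu>\<close> by (simp add: c_def)
  have Q_w: "Q (w r) = (\<lambda>y. (c * exp (- q * (r - a))) * Q (\<lambda>y. - indicator {x} y) y)" for r
    unfolding w_def using \<open>0 < c\<close> by (intro Q_affine) simp
  have "Q (\<lambda>y. - indicator {x} y) y \<le> 0" if "y \<noteq> x" for y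
    by (rule Q_nonpos_at_max) (use that in auto)
  then have super: "Q (w r) y \<le> c * (- q * exp (- q * (r - a))) * - indicator {x} y" for r y
    using \<open>0 < c\<close> by (cases "y = x") (auto simp: Q_w q_def mult_nonneg_nonpos)
  have "T s f x \<le> w s x"
  proof (rule T_le_supersolution[OF _ super])
    show "((\<lambda>r. w r y) has_real_derivative c * (- q * exp (- q * (r - a))) * - indicator {x} y)
        (at r within {a..})" for r y
      unfolding w_def by (rule derivative_eq_intros refl | simp)+
    show "T a f y \<le> w a y" for y
      using T_le_const[where f=f and x=y, OF upper \<open>0 \<le> a\<close>] by (cases "y = x") (auto simp: w_def c_def)
  qed (use assms in auto)
  moreover have "w s x < \<mu>" using \<open>0 < c\<close> by (simp add: w_def)
  ultimately show ?thesis by simp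
qed

lemma Q_indicator_above_lower_bound_nonpos:
  assumes lower: "\<And>y. \<mu> \<le> f y" and "0 < t"
  shows "Q (indicator {y. \<mu> < T t f y}) z \<le> 0"
proof (cases "\<mu> < T t f z")
  case True
  then show ?thesis by (intro Q_nonpos_at_max) (auto simp: indicator_def)
next
  case False
  define P where "P = {y. \<mu> < T t f y}"
  have ge: "\<mu> \<le> T r f y" if "0 \<le> r" for r y
    using T_ge_const[OF lower that] .
  with False \<open>0 < t\<close> have Tz: "T t f z = \<mu>" by (meson less_imp_le order.antisym not_less)
  have "Q (T t f) z = 0"
    by (rule DERIV_local_min[OF T_has_derivative_at[OF \<open>0 < t\<close>] \<open>0 < t\<close>]) (use Tz ge in auto)
  define c where "c = Min (insert 1 ((\<lambda>y. T t f y - \<mu>) ` P))"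
  have "0 < c" unfolding c_def by (subst Min_gr_iff) (auto simp: P_def)
  have c_le: "c \<le> T t f y - \<mu>" if "y \<in> P" for y
    unfolding c_def using that by (intro Min_le) auto
  have "\<mu> + c * indicator P y \<le> T t f y" for y
    using c_le[of y] ge[of t y] \<open>0 < t\<close> by (cases "y \<in> P") auto
  then have "Q (\<lambda>y. \<mu> + c * indicator P y) z \<le> Q (T t f) z"
    by (rule Q_mono_at) (use False Tz in \<open>simp add: P_def\<close>)
  with \<open>Q (T t f) z = 0\<close> \<open>0 < c\<close> show ?thesis
    by (simp add: Q_affine P_def mult_le_0_iff)
qed

lemma Q_neg_indicator_below_upper_bound_nonneg:
  assumes upper: "\<And>y. f y \<le> \<mu>" and "0 < t"
  shows "0 \<le> Q (\<lambda>y. - indicator {y. T t f y < \<mu>} y) z"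
proof (cases "T t f z < \<mu>")
  case True
  then show ?thesis by (intro Q_nonneg_at_min) (auto simp: indicator_def)
next
  case False
  define P where "P = {y. T t f y < \<mu>}"
  have le: "T r f y \<le> \<mu>" if "0 \<le> r" for r y
    using T_le_const[OF upper that] .
  with False \<open>0 < t\<close> have Tz: "T t f z = \<mu>" by (meson less_imp_le order.antisym not_less)
  have "Q (T t f) z = 0"
    by (rule DERIV_local_max[OF T_has_derivative_at[OF \<open>0 < t\<close>] \<open>0 < t\<close>]) (use Tz le in auto)
  define c where "c = Min (insert 1 ((\<lambda>y. \<mu> - T t f y) ` P))"
  have "0 < c" unfolding c_def by (subst Min_gr_iff) (auto simp: P_def)
  have c_le: "c \<le> \<mu> - T t f y" if "y \<in> P" for y
    unfolding c_def using that by (intro Min_le) auto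
  have "T t f y \<le> \<mu> + c * - indicator P y" for y
    using c_le[of y] le[of t y] \<open>0 < t\<close> by (cases "y \<in> P") auto
  then have "Q (T t f) z \<le> Q (\<lambda>y. \<mu> + c * - indicator P y) z"
    by (rule Q_mono_at) (use False Tz in \<open>simp add: P_def\<close>)
  moreover have "Q (\<lambda>y. \<mu> + c * - indicator P y) = (\<lambda>y. c * Q (\<lambda>y. - indicator P y) y)"
    by (rule Q_affine) (use \<open>0 < c\<close> in simp)
  ultimately show ?thesis
    using \<open>Q (T t f) z = 0\<close> \<open>0 < c\<close> by (simp add: P_def zero_le_mult_iff)
qed

lemma T_le_lower_bound_forward:
  assumes lower: "\<And>y. \<mu> \<le> f y" and "0 < t" "t \<le> s" and "T t f x \<le> \<mu>"
  shows "T s f x \<le> \<mu>"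
proof -
  define P where "P = {y. \<mu> < T t f y}"
  define K where "K = Max (insert 0 (range (\<lambda>y. T t f y - \<mu>)))"
  have "0 \<le> K" "\<And>y. T t f y - \<mu> \<le> K"
    unfolding K_def by (rule Max_ge; simp)+
  have "T s f x \<le> \<mu> + K * indicator P x"
  proof (rule T_le_supersolution[where dw="\<lambda>_ _. 0" and a=t])
    show "Q (\<lambda>y. \<mu> + K * indicator P y) y \<le> 0" for y
      using Q_indicator_above_lower_bound_nonpos[where f=f and z=y, OF lower \<open>0 < t\<close>] \<open>0 \<le> K\<close>
      by (simp add: Q_affine P_def mult_nonneg_nonpos)
    show "T t f y \<le> \<mu> + K * indicator P y" for y
      using \<open>T t f y - \<mu> \<le> K\<close> by (auto simp: P_def indicator_def)
  qed (use assms in auto)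
  with \<open>T t f x \<le> \<mu>\<close> show ?thesis by (simp add: P_def)
qed

lemma T_ge_upper_bound_forward:
  assumes upper: "\<And>y. f y \<le> \<mu>" and "0 < t" "t \<le> s" and "\<mu> \<le> T t f x"
  shows "\<mu> \<le> T s f x"
proof -
  define P where "P = {y. T t f y < \<mu>}"
  define K where "K = Max (insert 0 (range (\<lambda>y. \<mu> - T t f y)))"
  have "0 \<le> K" "\<And>y. \<mu> - T t f y \<le> K"
    unfolding K_def by (rule Max_ge; simp)+
  have "\<mu> + K * - indicator P x \<le> T s f x"
  proof (rule T_ge_subsolution[where du="\<lambda>_ _. 0" and a=t])
    show "0 \<le> Q (\<lambda>y. \<mu> + K * - indicator P y) y" for y
      using Q_neg_indicator_below_upper_bound_nonneg[where f=f and z=y, OF upper \<open>0 < t\<close>]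
        Q_affine[OF \<open>0 \<le> K\<close>, of \<mu> "\<lambda>y. - indicator P y"] \<open>0 \<le> K\<close>
      by (simp add: P_def zero_le_mult_iff)
    show "\<mu> + K * - indicator P y \<le> T t f y" for y
      using \<open>\<mu> - T t f y \<le> K\<close> by (auto simp: P_def indicator_def)
  qed (use assms in auto)
  with \<open>\<mu> \<le> T t f x\<close> show ?thesis by (simp add: P_def)
qed

lemma T_gt_lower_bound_iff:
  assumes "\<And>y. \<mu> \<le> f y" and "0 < t" "0 < s"
  shows "\<mu> < T t f x \<longleftrightarrow> \<mu> < T s f x"
proof -
  have same: "\<mu> < T r f x \<longleftrightarrow> \<mu> < T r' f x" if "0 < r" "r \<le> r'" for r r'
    using T_gt_lower_bound_forward[where f=f and a=r and s=r' and x=x, OF assms(1)]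
      T_le_lower_bound_forward[where f=f and x=x, OF assms(1) that]
      that by (metis less_imp_le not_le)
  show ?thesis
  proof (cases "t \<le> s")
    case True
    with same[of t s] \<open>0 < t\<close> show ?thesis by simp
  next
    case False
    with same[of s t] \<open>0 < s\<close> show ?thesis by simp
  qed
qed

lemma T_lt_upper_bound_iff:
  assumes "\<And>y. f y \<le> \<mu>" and "0 < t" "0 < s"
  shows "T t f x < \<mu> \<longleftrightarrow> T s f x < \<mu>"
proof -
  have same: "T r f x < \<mu> \<longleftrightarrow> T r' f x < \<mu>" if "0 < r" "r \<le> r'" for r r'
    using T_lt_upper_bound_forward[where f=f and a=r and s=r' and x=x, OF assms(1)]
      T_ge_upper_bound_forward[where f=f and x=x, OF assms(1) that]
      that by (metis less_imp_le not_le)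
  show ?thesis
  proof (cases "t \<le> s")
    case True
    with same[of t s] \<open>0 < t\<close> show ?thesis by simp
  next
    case False
    with same[of s t] \<open>0 < s\<close> show ?thesis by simp
  qed
qed

end

theorem corollary3:
  fixes Q :: "('x::finite \<Rightarrow> real) \<Rightarrow> ('x \<Rightarrow> real)"
    and T :: "real \<Rightarrow> ('x \<Rightarrow> real) \<Rightarrow> ('x \<Rightarrow> real)"
    and A :: "'x set" and x :: 'x and t s :: real
  assumes "lower_rate_op Q"
    and "lower_semigroup_of Q T"
    and "t > 0" and "s > 0"
  shows "((x \<in> A \<longrightarrow> T t (indicator A) x > 0) \<and>
           (T t (indicator A) x > 0 \<longleftrightarrow> T s (indicator A) x > 0)) \<and>
         ((x \<notin> A \<longrightarrow> T t (indicator A) x < 1) \<and>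
           (T t (indicator A) x < 1 \<longleftrightarrow> T s (indicator A) x < 1)) \<and>
         ((x \<in> A \<longrightarrow> upper_of T t (indicator A) x > 0) \<and>
           (upper_of T t (indicator A) x > 0 \<longleftrightarrow> upper_of T s (indicator A) x > 0)) \<and>
         ((x \<notin> A \<longrightarrow> upper_of T t (indicator A) x < 1) \<and>
           (upper_of T t (indicator A) x < 1 \<longleftrightarrow> upper_of T s (indicator A) x < 1))"
proof -
  interpret lower_semigroup Q T
    using assms(1,2) by unfold_locales
  define f where "f = (indicator A :: 'x \<Rightarrow> real)"
  define g where "g y = - f y" for y
  have f: "0 \<le> f y" "f y \<le> 1" and g: "-1 \<le> g y" "g y \<le> 0" for y
    by (auto simp: f_def g_def indicator_def)
  have upper: "upper_of T r f x = - T r g x" for r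
    by (simp add: upper_of_def g_def[abs_def])
  have "0 \<le> t" using \<open>0 < t\<close> by simp
  have "x \<in> A \<Longrightarrow> 0 < T t f x" "x \<notin> A \<Longrightarrow> T t f x < 1"
    "x \<in> A \<Longrightarrow> T t g x < 0" "x \<notin> A \<Longrightarrow> -1 < T t g x"
    by (auto intro!: T_gt_lower_bound_forward[OF _ order.refl \<open>0 \<le> t\<close>]
        T_lt_upper_bound_forward[OF _ order.refl \<open>0 \<le> t\<close>] f g simp: T_zero f_def g_def)
  moreover have "0 < T t f x \<longleftrightarrow> 0 < T s f x" "T t f x < 1 \<longleftrightarrow> T s f x < 1"
    "T t g x < 0 \<longleftrightarrow> T s g x < 0" "-1 < T t g x \<longleftrightarrow> -1 < T s g x"
    using assms(3,4) by (intro T_gt_lower_bound_iff T_lt_upper_bound_iff f g; simp)+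
  ultimately show ?thesis
    using upper unfolding f_def by auto
qed

end
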